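(* Let $k$ be a positive integer with $\mathcal A_k\neq\varnothing$. Then the sequence of iterates $z(k),z^2(k),z^3(k),\dots$ takes only finitely many values (it eventually reaches a fixed point of $z$), and \[c(k)=k\cdot\operatorname{lcm}\{z^i(k)\}_{i=1}^{\infty}.\]
   Context: $F_n$ is the $n$-th Fibonacci number ($F_0=0,F_1=1$). For a positive integer $n$, $z(n)$ is the least positive integer $m$ with $n\mid F_m$, and $z^i$ denotes the $i$-th iterate of $z$. For a positive integer $k$, $\mathcal A_k:=\{n\in\mathbb N:\ z(n)\mid n \text{ and } n/z(n)=k\}$, and $c(k):=\min\mathcal A_k$. *)

theory Defs
  imports "HOL-Number_Theory.Fib"
begin

definition zfib :: "nat \<Rightarrow> nat" where
  "zfib n = (LEAST m. 0 < m \<and> n dvd fib m)"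

definition A_set :: "nat \<Rightarrow> nat set" where
  "A_set k = {n. 0 < n \<and> zfib n dvd n \<and> n div zfib n = k}"

definition c_min :: "nat \<Rightarrow> nat" where
  "c_min k = (LEAST n. n \<in> A_set k)"

end

(*
  If \<open>n \<in> A_set k\<close>, every iterate \<open>z\<^sup>i(k)\<close>, \<open>i \<ge> 1\<close>, divides \<open>m = z(n)\<close>: \<open>z\<close> is monotone
  for divisibility and \<open>z(m) dvd m\<close>. So the orbit is finite and eventually periodic. A periodic
  orbit consists of fixed points: its primes are at most 5 (for primes \<open>q \<noteq> 2, 5\<close> one has
  \<open>z(q) dvd q \<pm> 1\<close>, proved in \<open>\<int>[\<phi>]\<close>), its 2- and 3-parts are bounded, hence every element
  \<open>c\<close> satisfies \<open>c dvd F\<^sub>c\<close>, i.e. \<open>z(c) dvd c\<close>, and a cycle descending in divisibility is constant.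

  For \<open>L\<close> the lcm of the orbit, \<open>L dvd z(n')\<close> for every \<open>n' \<in> A_set k\<close> and \<open>L dvd z(kL)\<close> by
  monotonicity, while \<open>z(kL) dvd L\<close> because \<open>kL dvd F\<^sub>L\<close>: this follows from
  \<open>k z(n) = n dvd F\<^bsub>z(n)\<^esub>\<close> and \<open>L dvd z(n)\<close> by lifting the exponent for Fibonacci numbers.
  Hence \<open>kL\<close> is the least element of \<open>A_set k\<close>.
*)

theory Submission
  imports Defs "HOL-Number_Theory.Number_Theory"
begin

(* \<open>ZPhi a b\<close> is \<open>a + b\<phi>\<close> in \<open>\<int>[\<phi>]\<close>, multiplied using \<open>\<phi>\<^sup>2 = \<phi> + 1\<close>. *)
datatype zphi = ZPhi (const_part: int) (phi_part: int)

instantiation zphi :: comm_ring_1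
begin
definition "0 = ZPhi 0 0"
definition "1 = ZPhi 1 0"
definition "x + y = ZPhi (const_part x + const_part y) (phi_part x + phi_part y)"
definition "x - y = ZPhi (const_part x - const_part y) (phi_part x - phi_part y)"
definition "- x = ZPhi (- const_part x) (- phi_part x)"
definition "x * y = ZPhi (const_part x * const_part y + phi_part x * phi_part y)
  (const_part x * phi_part y + phi_part x * const_part y + phi_part x * phi_part y)"
instance
  by standard (simp_all add: zphi.expand zero_zphi_def one_zphi_def plus_zphi_def minus_zphi_def
      uminus_zphi_def times_zphi_def algebra_simps)
end

lemma zphi_parts [simp]:
  "const_part 0 = 0" "phi_part 0 = 0" "const_part 1 = 1" "phi_part 1 = 0"
  "const_part (x + y) = const_part x + const_part y" "phi_part (x + y) = phi_part x + phi_part y"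
  "const_part (x * y) = const_part x * const_part y + phi_part x * phi_part y"
  "phi_part (x * y) = const_part x * phi_part y + phi_part x * const_part y + phi_part x * phi_part y"
  "const_part (x - y) = const_part x - const_part y" "phi_part (x - y) = phi_part x - phi_part y"
  by (simp_all add: zero_zphi_def one_zphi_def plus_zphi_def times_zphi_def minus_zphi_def)

lemma zphi_eq_iff: "x = y \<longleftrightarrow> const_part x = const_part y \<and> phi_part x = phi_part y"
  by (cases x; cases y) simp

lemma zphi_parts_of_nat [simp]: "const_part (of_nat n) = int n" "phi_part (of_nat n) = 0"
  by (induction n) simp_all

lemma zphi_parts_numeral_power [simp]:
  "const_part (numeral m ^ n) = numeral m ^ n" "phi_part (numeral m ^ n) = 0"
  "const_part (numeral m) = numeral m" "phi_part (numeral m) = 0"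
  using zphi_parts_of_nat[of "numeral m ^ n"] zphi_parts_of_nat[of "numeral m"] by simp_all

lemma zphi_parts_sum:
  "const_part (sum f A) = (\<Sum>x\<in>A. const_part (f x))" "phi_part (sum f A) = (\<Sum>x\<in>A. phi_part (f x))"
  by (induction A rule: infinite_finite_induct) simp_all

abbreviation phi :: zphi where "phi \<equiv> ZPhi 0 1"

lemma phi_power_Suc: "phi ^ Suc n = ZPhi (int (fib n)) (int (fib (Suc n)))"
  by (induction n) (simp_all add: zphi.expand power_Suc2)

lemma phi_part_phi_power: "phi_part (phi ^ n) = int (fib n)"
  by (cases n) (simp_all only: phi_power_Suc zphi.sel, simp)

lemma fib_mult_binomial:
  "fib (Suc y * q) = (\<Sum>j\<le>q. (q choose j) * fib (Suc y) ^ j * fib y ^ (q - j) * fib j)"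
proof -
  have "phi ^ Suc y = of_nat (fib (Suc y)) * phi + of_nat (fib y)"
    unfolding phi_power_Suc by (simp add: zphi.expand)
  then have "phi ^ (Suc y * q) = (of_nat (fib (Suc y)) * phi + of_nat (fib y)) ^ q"
    by (simp only: power_mult)
  also have "\<dots> = (\<Sum>j\<le>q. of_nat ((q choose j) * fib (Suc y) ^ j * fib y ^ (q - j)) * phi ^ j)"
    unfolding binomial_ring by (simp add: power_mult_distrib mult_ac)
  finally have "phi_part (phi ^ (Suc y * q)) = phi_part \<dots>" by simp
  then show ?thesis
    by (simp add: zphi_parts_sum phi_part_phi_power flip: of_nat_mult of_nat_sum)
qed

lemma one_plus_power_prime:
  fixes s :: "'a :: comm_semiring_1"
  assumes "prime p"
  obtains w where "(1 + s) ^ p = 1 + s ^ p + of_nat p * w"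
proof
  have p0: "0 < p" using assms prime_gt_0_nat by blast
  have split: "{..p} = insert 0 (insert p {1..<p})" using p0 by auto
  have "(1 + s) ^ p = (\<Sum>k\<le>p. of_nat (p choose k) * s ^ k)"
    by (simp add: binomial_ring add.commute[of 1])
  also have "\<dots> = 1 + s ^ p + (\<Sum>k\<in>{1..<p}. of_nat (p choose k) * s ^ k)"
    using p0 by (simp add: split add.assoc)
  also have "(\<Sum>k\<in>{1..<p}. of_nat (p choose k) * s ^ k) = of_nat p * (\<Sum>k\<in>{1..<p}. of_nat ((p choose k) div p) * s ^ k)"
    unfolding sum_distrib_left
  proof (rule sum.cong)
    fix k assume "k \<in> {1..<p}"
    then have "p choose k = p * ((p choose k) div p)" using dvd_choose_prime[of k p] assms by simp
    then show "of_nat (p choose k) * s ^ k = of_nat p * (of_nat ((p choose k) div p) * s ^ k)"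
      by (metis mult.assoc of_nat_mult)
  qed simp
  finally show "(1 + s) ^ p = 1 + s ^ p + of_nat p * (\<Sum>k\<in>{1..<p}. of_nat ((p choose k) div p) * s ^ k)" .
qed

(* Inside \<open>\<int>[\<phi>]\<close> take \<open>s = 2\<phi> - 1\<close>, a square root of 5, and compare \<open>(2\<phi>)\<^sup>p = 2\<^sup>p \<phi>\<^sup>p\<close>
   with \<open>(1 + s)\<^sup>p \<equiv> 1 + 5\<^sup>h s (mod p)\<close>. *)
lemma fib_prime_congs:
  assumes p: "prime p" and ph: "p = Suc (2 * h)"
  shows "[2 * int (fib (p - 1)) = 1 - 5 ^ h] (mod int p)"
    and "[2 * int (fib p) = 2 * 5 ^ h] (mod int p)"
proof -
  define s where "s = ZPhi (-1) 2"
  have s_pow: "s ^ p = 5 ^ h * s"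
  proof -
    have "s ^ 2 = 5" by (simp add: s_def power2_eq_square zphi_eq_iff)
    then show ?thesis by (simp add: ph power_mult)
  qed
  obtain w where w: "(1 + s) ^ p = 1 + s ^ p + of_nat p * w"
    using one_plus_power_prime[OF p] by blast
  have "phi ^ p = ZPhi (int (fib (p - 1))) (int (fib p))"
    using phi_power_Suc[of "p - 1"] ph by simp
  then have "2 ^ p * ZPhi (int (fib (p - 1))) (int (fib p)) = (2 * phi) ^ p"
    by (simp only: power_mult_distrib)
  also have "2 * phi = 1 + s" by (simp add: s_def zphi_eq_iff)
  also note w
  finally have "2 ^ p * ZPhi (int (fib (p - 1))) (int (fib p)) = 1 + 5 ^ h * s + of_nat p * w"
    by (simp only: s_pow)
  from arg_cong[OF this, of const_part] arg_cong[OF this, of phi_part]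
  have "2 ^ p * int (fib (p - 1)) = 1 - 5 ^ h + int p * const_part w"
    and "2 ^ p * int (fib p) = 2 * 5 ^ h + int p * phi_part w"
    by (simp_all add: s_def)
  then have "[2 ^ p * int (fib (p - 1)) = 1 - 5 ^ h] (mod int p)"
    and "[2 ^ p * int (fib p) = 2 * 5 ^ h] (mod int p)"
    by (simp_all add: cong_iff_dvd_diff)
  moreover have "[2 ^ p = 2] (mod int p)"
  proof -
    have "p \<noteq> 2" using ph by presburger
    then have "\<not> p dvd 2" using primes_dvd_imp_eq[OF p two_is_prime_nat] by blast
    then have "[2 ^ (p - 1) * 2 = 1 * 2] (mod p)" using fermat_theorem[OF p] cong_scalar_right by blast
    then have "[2 ^ p = 2] (mod p)" using ph by (simp add: mult.commute)
    then show ?thesis by (metis cong_int_iff of_nat_numeral of_nat_power)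
  qed
  ultimately show "[2 * int (fib (p - 1)) = 1 - 5 ^ h] (mod int p)"
    and "[2 * int (fib p) = 2 * 5 ^ h] (mod int p)"
    using cong_trans[OF cong_scalar_right[OF cong_sym]] by blast+
qed

lemma prime_dvd_fib_pred_or_succ:
  assumes p: "prime p" "p \<noteq> 2" "p \<noteq> 5"
  shows "p dvd fib (p - 1) \<or> p dvd fib (p + 1)"
proof -
  have "odd p" using p by (metis primes_dvd_imp_eq two_is_prime_nat)
  then obtain h where ph: "p = Suc (2 * h)" by (metis oddE Suc_eq_plus1)
  note c1 = fib_prime_congs(1)[OF p(1) ph] and c2 = fib_prime_congs(2)[OF p(1) ph]
  have "prime (5::nat)" by simp
  then have "\<not> p dvd 2" "\<not> p dvd 5"
    using p primes_dvd_imp_eq two_is_prime_nat by metis+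
  then have "[5 ^ (2 * h) = 1] (mod p)" using fermat_theorem[OF p(1)] ph by auto
  then have five: "int p dvd (5 ^ h - 1) * (5 ^ h + 1)"
    by (simp add: cong_iff_dvd_diff power_mult power2_eq_square algebra_simps flip: cong_int_iff)
  have pz: "prime (int p)" using p(1) by simp
  have "\<not> int p dvd 2" using \<open>\<not> p dvd 2\<close> by (metis int_dvd_int_iff of_nat_numeral)
  then have cancel2: "p dvd n" if "int p dvd 2 * int n" for n
    using that prime_dvd_mult_iff[OF pz] by auto
  from five consider "int p dvd 5 ^ h - 1" | "int p dvd 5 ^ h + 1"
    using prime_dvd_mult_iff[OF pz] by blast
  then show ?thesis
  proof cases
    case 1
    then have "[1 - 5 ^ h = 0] (mod int p)"
      unfolding cong_0_iff by (metis dvd_minus_iff minus_diff_eq)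
    from cong_trans[OF c1 this] have "int p dvd 2 * int (fib (p - 1))"
      by (simp only: cong_0_iff)
    then show ?thesis using cancel2 by blast
  next
    case 2
    have "fib (p + 1) = fib p + fib (p - 1)" using ph by simp
    then have "[2 * int (fib (p + 1)) = 2 * 5 ^ h + (1 - 5 ^ h)] (mod int p)"
      using cong_add[OF c2 c1] by (simp add: algebra_simps)
    also have "[2 * 5 ^ h + (1 - 5 ^ h) = 0] (mod int p)"
      using 2 unfolding cong_0_iff by (simp add: add.commute)
    finally have "int p dvd 2 * int (fib (p + 1))"
      by (simp only: cong_0_iff)
    then show ?thesis using cancel2 by blast
  qed
qed

lemma fib_dvd_fib: "m dvd n \<Longrightarrow> fib m dvd fib n"
  by (metis fib_gcd gcd_dvd2 gcd_nat.absorb1)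

lemma prime_not_dvd_fib_pred:
  assumes "prime r" "r dvd fib (Suc y)"
  shows "\<not> r dvd fib y"
  using assms coprime_fib_Suc_nat[of y] by (metis coprime_common_divisor not_prime_unit)

(* \<open>F\<^bsub>(y+1)q\<^esub> / F\<^bsub>y+1\<^esub>\<close> *)
definition fib_cofactor :: "nat \<Rightarrow> nat \<Rightarrow> nat" where
  "fib_cofactor y q = (\<Sum>j = 1..q. (q choose j) * fib (Suc y) ^ (j - 1) * fib y ^ (q - j) * fib j)"

lemma fib_mult_eq_cofactor: "fib (Suc y * q) = fib (Suc y) * fib_cofactor y q"
proof -
  have "fib (Suc y * q) = (\<Sum>j = 1..q. (q choose j) * fib (Suc y) ^ j * fib y ^ (q - j) * fib j)"
    using fib_mult_binomial[of y q] by (simp add: atMost_atLeast0 sum.atLeast_Suc_atMost)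
  also have "\<dots> = fib (Suc y) * fib_cofactor y q"
    unfolding fib_cofactor_def sum_distrib_left
    by (intro sum.cong refl) (simp add: power_eq_if)
  finally show ?thesis .
qed

lemma fib_cofactor_decomp:
  assumes "\<forall>j\<in>{2..q}. d dvd (q choose j) * fib (Suc y) ^ (j - 1)"
  obtains R where "fib_cofactor y q = q * fib y ^ (q - 1) + d * R"
proof (cases "q = 0")
  case True
  then show ?thesis using that[of 0] by (simp add: fib_cofactor_def)
next
  case False
  then have "{1..q} = insert 1 {2..q}" by auto
  then have "fib_cofactor y q = q * fib y ^ (q - 1)
      + (\<Sum>j = 2..q. (q choose j) * fib (Suc y) ^ (j - 1) * fib y ^ (q - j) * fib j)"
    by (simp add: fib_cofactor_def)
  moreover have "d dvd (\<Sum>j = 2..q. (q choose j) * fib (Suc y) ^ (j - 1) * fib y ^ (q - j) * fib j)"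
    using assms by (intro dvd_sum) (simp add: mult.assoc dvd_mult2 flip: mult.assoc)
  ultimately show ?thesis using that by (auto elim!: dvdE)
qed

lemma fib_cofactor_mod_fib:
  obtains R where "fib_cofactor y q = q * fib y ^ (q - 1) + fib (Suc y) * R"
  by (rule fib_cofactor_decomp[of q "fib (Suc y)" y]) (auto intro: dvd_mult dvd_power)

lemma fib_cofactor_mod_prime_square:
  assumes p: "prime p" "p dvd fib (Suc y)" "p \<noteq> 2 \<or> 4 dvd fib (Suc y)"
  obtains R where "fib_cofactor y p = p * fib y ^ (p - 1) + p ^ 2 * R"
proof (rule fib_cofactor_decomp, intro ballI)
  fix j assume j: "j \<in> {2..p}"
  show "p ^ 2 dvd (p choose j) * fib (Suc y) ^ (j - 1)"
  proof (cases "j = p")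
    case True
    show ?thesis
    proof (cases "p = 2")
      case True
      with p \<open>j = p\<close> show ?thesis by simp
    next
      case False
      then have "2 \<le> j - 1" using j \<open>j = p\<close> prime_ge_2_nat[OF p(1)] by simp
      then have "fib (Suc y) ^ 2 dvd fib (Suc y) ^ (j - 1)" by (rule le_imp_power_dvd)
      then show ?thesis using p(2) by (meson dvd_mult dvd_power_same dvd_trans)
    qed
  next
    case False
    then have "p dvd (p choose j)" using j p(1) by (intro dvd_choose_prime) auto
    moreover have "p dvd fib (Suc y) ^ (j - 1)" using j p(2) by (auto intro: dvd_power dvd_trans)
    ultimately show ?thesis by (simp add: power2_eq_square mult_dvd_mono)
  qed
qed

lemma fib_mult_dvd:
  assumes "a dvd fib x" "c dvd fib x"
  shows "a * c dvd fib (a * x)"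
proof (cases x)
  case 0
  then show ?thesis by simp
next
  case (Suc y)
  obtain R where R: "fib_cofactor y a = a * fib y ^ (a - 1) + fib x * R"
    using fib_cofactor_mod_fib Suc by blast
  have "fib (a * x) = fib x * (a * fib y ^ (a - 1)) + fib x * fib x * R"
    using fib_mult_eq_cofactor[of y a] Suc R by (simp add: algebra_simps)
  moreover have "a * c dvd fib x * (a * fib y ^ (a - 1))"
    using assms(2) by (simp add: mult_dvd_mono mult.commute)
  moreover have "a * c dvd fib x * fib x * R"
    using assms by (simp add: mult_dvd_mono dvd_mult2)
  ultimately show ?thesis by simp
qed

lemma prime_power_dvd_fib_mult_coprime:
  assumes r: "prime r" "r dvd fib x" "\<not> r dvd t" and "0 < x" and dvd: "r ^ a dvd fib (x * t)"
  shows "r ^ a dvd fib x"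
proof -
  obtain y where x: "x = Suc y" using \<open>0 < x\<close> by (cases x) auto
  obtain R where R: "fib_cofactor y t = t * fib y ^ (t - 1) + fib x * R"
    using fib_cofactor_mod_fib x by blast
  have "\<not> r dvd fib_cofactor y t"
  proof
    assume "r dvd fib_cofactor y t"
    then have "r dvd t * fib y ^ (t - 1)"
      using R r(2) by (metis dvd_add_right_iff dvd_mult2 add.commute)
    then show False
      using r prime_not_dvd_fib_pred[of r y] x by (auto simp: prime_dvd_mult_iff dest: prime_dvd_power)
  qed
  then have "coprime (r ^ a) (fib_cofactor y t)" using r(1) by (simp add: prime_imp_coprime)
  moreover have "r ^ a dvd fib x * fib_cofactor y t"
    using dvd fib_mult_eq_cofactor[of y t] x by simp
  ultimately show ?thesis by (simp add: coprime_dvd_mult_left_iff)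
qed

lemma prime_power_dvd_fib_mult_self:
  assumes r: "prime r" "r dvd fib x" "r \<noteq> 2 \<or> 4 dvd fib x" and "0 < x"
    and dvd: "r ^ Suc a dvd fib (x * r)"
  shows "r ^ a dvd fib x"
proof -
  obtain y where x: "x = Suc y" using \<open>0 < x\<close> by (cases x) auto
  obtain R where R: "fib_cofactor y r = r * fib y ^ (r - 1) + r ^ 2 * R"
    using fib_cofactor_mod_prime_square r x by blast
  define u where "u = fib y ^ (r - 1) + r * R"
  have "fib (x * r) = r * (fib x * u)"
    using fib_mult_eq_cofactor[of y r] R x by (simp add: u_def power2_eq_square algebra_simps)
  with dvd r(1) have "r ^ a dvd fib x * u" by (simp add: prime_gt_0_nat)
  moreover have "\<not> r dvd u"
  proof
    assume "r dvd u"
    then have "r dvd fib y ^ (r - 1)" by (simp add: u_def dvd_add_left_iff)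
    then show False using r prime_not_dvd_fib_pred[of r y] x by (auto dest: prime_dvd_power)
  qed
  then have "coprime (r ^ a) u" using r(1) by (simp add: prime_imp_coprime)
  ultimately show ?thesis by (simp add: coprime_dvd_mult_left_iff)
qed

(* The upper half of lifting the exponent: \<open>v\<^sub>r(F\<^bsub>x r\<^sup>d t\<^esub>) \<le> v\<^sub>r(F\<^sub>x) + d\<close>. *)
lemma prime_power_dvd_fib_mult:
  assumes r: "prime r" "\<not> r dvd t"
  shows "0 < x \<Longrightarrow> r dvd fib x \<Longrightarrow> r \<noteq> 2 \<or> 4 dvd fib x \<Longrightarrow>
    r ^ (a + d) dvd fib (x * r ^ d * t) \<Longrightarrow> r ^ a dvd fib x"
proof (induction d arbitrary: a x)
  case 0
  then show ?case using prime_power_dvd_fib_mult_coprime r by simp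
next
  case (Suc d)
  have "fib x dvd fib (x * r)" by (simp add: fib_dvd_fib)
  moreover have "r ^ (Suc a + d) dvd fib (x * r * r ^ d * t)"
    using Suc.prems(4) by (simp add: mult_ac)
  moreover have "0 < x * r" using Suc.prems(1) r(1) prime_gt_0_nat by simp
  ultimately have "r ^ Suc a dvd fib (x * r)"
    using Suc.IH Suc.prems(2,3) dvd_trans by blast
  then show ?case using prime_power_dvd_fib_mult_self r(1) Suc.prems(1-3) by blast
qed

lemma dvd_fib_of_dvd_fib_mult:
  assumes "0 < x" "0 < D" and dvd: "b * D dvd fib (x * D)"
    and primes: "\<And>r. prime r \<Longrightarrow> r dvd b \<Longrightarrow> r dvd fib x \<and> (r = 2 \<longrightarrow> 4 dvd fib x)"
  shows "b dvd fib x"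
proof (cases "b = 0")
  case True
  then show ?thesis using dvd \<open>0 < x\<close> \<open>0 < D\<close> fib_neq_0_nat[of "x * D"] by simp
next
  case False
  show ?thesis
  proof (rule multiplicity_le_imp_dvd[OF False])
    fix r :: nat assume r: "prime r"
    show "multiplicity r b \<le> multiplicity r (fib x)"
    proof (cases "r dvd b")
      case False
      then show ?thesis by (simp add: not_dvd_imp_multiplicity_0)
    next
      case True
      obtain t where D: "D = r ^ multiplicity r D * t" and "\<not> r dvd t"
        using multiplicity_decompose'[of D r] \<open>0 < D\<close> r not_prime_unit by blast
      have "r ^ (multiplicity r b + multiplicity r D) dvd b * D"
        by (simp add: power_add mult_dvd_mono multiplicity_dvd)
      also have "b * D dvd fib (x * r ^ multiplicity r D * t)"
        using dvd D by (metis mult.assoc)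
      finally have "r ^ multiplicity r b dvd fib x"
        using prime_power_dvd_fib_mult r \<open>\<not> r dvd t\<close> \<open>0 < x\<close> primes[OF r True] by blast
      then show ?thesis
        using power_dvd_iff_le_multiplicity[of "fib x" r] fib_neq_0_nat[OF \<open>0 < x\<close>] prime_gt_1_nat[OF r]
        by simp
    qed
  qed
qed

lemma fib_values: "fib 3 = 2" "fib 4 = 3" "fib 5 = 5" "fib 6 = 8" "fib 12 = 144"
  by (simp_all add: numeral_eq_Suc)

lemma prime_dvd_fib_exists:
  assumes "prime q"
  shows "\<exists>m>0. q dvd fib m"
proof -
  consider "q = 2" | "q = 5" | "q \<noteq> 2" "q \<noteq> 5" by blast
  then show ?thesis
  proof cases
    case 1
    then show ?thesis by (intro exI[of _ 3]) (simp add: fib_values)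
  next
    case 2
    then show ?thesis by (intro exI[of _ 5]) (simp add: fib_values)
  next
    case 3
    have "0 < q - 1" using prime_ge_2_nat[OF assms] by simp
    from prime_dvd_fib_pred_or_succ[OF assms 3] show ?thesis
    proof
      assume "q dvd fib (q - 1)"
      with \<open>0 < q - 1\<close> show ?thesis by (intro exI[of _ "q - 1"] conjI)
    next
      assume "q dvd fib (q + 1)"
      then show ?thesis by (intro exI[of _ "q + 1"] conjI) simp_all
    qed
  qed
qed

lemma dvd_fib_exists: "0 < n \<Longrightarrow> \<exists>m>0. n dvd fib m"
proof (induction n rule: prime_divisors_induct)
  case zero
  then show ?case by simp
next
  case (unit x)
  then show ?case by (intro exI[of _ 1]) simp
next
  case (factor p x)
  then have "0 < x" by simp
  then obtain a where a: "0 < a" "x dvd fib a" using factor.IH by blast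
  obtain b where b: "0 < b" "p dvd fib b" using prime_dvd_fib_exists factor.hyps by blast
  show ?case
  proof (cases "p dvd x")
    case True
    have "p * x dvd fib (p * a)" using fib_mult_dvd[OF dvd_trans[OF True a(2)] a(2)] .
    then show ?thesis using a(1) factor.hyps prime_gt_0_nat by (intro exI[of _ "p * a"]) simp
  next
    case False
    then have "coprime p x" using factor.hyps by (simp add: prime_imp_coprime)
    moreover have "p dvd fib (a * b)" using dvd_trans[OF b(2) fib_dvd_fib[of b "a * b"]] by simp
    moreover have "x dvd fib (a * b)" using dvd_trans[OF a(2) fib_dvd_fib[of a "a * b"]] by simp
    ultimately have "p * x dvd fib (a * b)" by (simp add: divides_mult)
    then show ?thesis using a b by (intro exI[of _ "a * b"]) simp
  qed
qed

lemma zfib_pos: "0 < n \<Longrightarrow> 0 < zfib n"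
  and dvd_fib_zfib: "0 < n \<Longrightarrow> n dvd fib (zfib n)"
  unfolding zfib_def using LeastI_ex[OF dvd_fib_exists] by blast+

lemma zfib_le: "0 < m \<Longrightarrow> n dvd fib m \<Longrightarrow> zfib n \<le> m"
  unfolding zfib_def by (rule Least_le) simp

lemma dvd_fib_iff_zfib_dvd:
  assumes "0 < n"
  shows "n dvd fib m \<longleftrightarrow> zfib n dvd m"
proof
  assume dvd: "n dvd fib m"
  show "zfib n dvd m"
  proof (cases "m = 0")
    case False
    have "n dvd fib (gcd m (zfib n))"
      using dvd dvd_fib_zfib[OF assms] by (simp add: fib_gcd)
    then have "zfib n \<le> gcd m (zfib n)" using False by (intro zfib_le) simp_all
    then have "gcd m (zfib n) = zfib n"
      using zfib_pos[OF assms] by (meson dvd_imp_le gcd_dvd2 le_antisym)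
    then show ?thesis by (metis gcd_dvd1)
  qed simp
next
  assume "zfib n dvd m"
  then show "n dvd fib m" using dvd_fib_zfib[OF assms] fib_dvd_fib dvd_trans by blast
qed

lemma zfib_dvd_zfib:
  assumes "0 < b" "a dvd b"
  shows "zfib a dvd zfib b"
proof -
  have "0 < a" using assms by (auto intro: gr0I)
  then show ?thesis
    using assms dvd_fib_zfib dvd_trans dvd_fib_iff_zfib_dvd by blast
qed

lemma zfib_eqI:
  assumes "0 < m" "n dvd fib m" "\<And>j. 0 < j \<Longrightarrow> j < m \<Longrightarrow> \<not> n dvd fib j"
  shows "zfib n = m"
  unfolding zfib_def by (rule Least_equality) (use assms in \<open>auto simp: not_less[symmetric]\<close>)

lemma zfib_lcm:
  assumes "0 < a" "0 < b"
  shows "zfib (lcm a b) = lcm (zfib a) (zfib b)"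
proof (rule dvd_antisym)
  have "0 < lcm a b" using assms by (simp add: lcm_pos_nat)
  have "a dvd fib (lcm (zfib a) (zfib b))" "b dvd fib (lcm (zfib a) (zfib b))"
    using assms by (simp_all add: dvd_fib_iff_zfib_dvd)
  then have "lcm a b dvd fib (lcm (zfib a) (zfib b))" by (rule lcm_least)
  then show "zfib (lcm a b) dvd lcm (zfib a) (zfib b)"
    using dvd_fib_iff_zfib_dvd[OF \<open>0 < lcm a b\<close>] by blast
  show "lcm (zfib a) (zfib b) dvd zfib (lcm a b)"
    using \<open>0 < lcm a b\<close> by (simp add: zfib_dvd_zfib)
qed

lemma zfib_mult_coprime:
  "0 < a \<Longrightarrow> 0 < b \<Longrightarrow> coprime a b \<Longrightarrow> zfib (a * b) = lcm (zfib a) (zfib b)"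
  using zfib_lcm[of a b] by (simp add: lcm_coprime)

lemma zfib_prime_power_dvd:
  assumes "prime q"
  shows "zfib (q ^ Suc e) dvd q ^ e * zfib q"
proof -
  have q: "0 < q" using assms prime_gt_0_nat by blast
  have "q ^ Suc e dvd fib (q ^ e * zfib q)"
  proof (induction e)
    case 0
    then show ?case using dvd_fib_zfib[OF q] by simp
  next
    case (Suc e)
    then have "q dvd fib (q ^ e * zfib q)" by (metis dvd_trans dvd_power zero_less_Suc)
    then have "q * q ^ Suc e dvd fib (q * (q ^ e * zfib q))" using Suc.IH by (rule fib_mult_dvd)
    then show ?case by (simp add: mult.assoc)
  qed
  then show ?thesis using q by (simp add: dvd_fib_iff_zfib_dvd)
qed

lemma zfib_prime_dvd_pred_or_succ:
  "prime q \<Longrightarrow> q \<noteq> 2 \<Longrightarrow> q \<noteq> 5 \<Longrightarrow> zfib q dvd q - 1 \<or> zfib q dvd q + 1"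
  using prime_dvd_fib_pred_or_succ dvd_fib_iff_zfib_dvd prime_gt_0_nat by blast

lemma zfib_1: "zfib 1 = 1"
  by (rule zfib_eqI) auto

lemma zfib_2: "zfib 2 = 3" and zfib_3: "zfib 3 = 4" and zfib_4: "zfib 4 = 6"
  and zfib_5: "zfib 5 = 5"
proof -
  have less_6: "j \<in> {1, 2, 3, 4, 5}" if "0 < j" "j < (6::nat)" for j
    using that by auto
  show "zfib 2 = 3" "zfib 3 = 4" "zfib 4 = 6" "zfib 5 = 5"
    by (intro zfib_eqI; fastforce simp: fib_values dest: less_6)+
qed

lemma zfib_6: "zfib 6 = 12" and zfib_12: "zfib 12 = 12"
proof -
  have "lcm 2 3 = (6::nat)" "lcm 4 3 = (12::nat)" "lcm 3 4 = (12::nat)" "lcm 6 4 = (12::nat)"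
    by (simp_all add: lcm_nat_def gcd_non_0_nat)
  then show "zfib 6 = 12" "zfib 12 = 12"
    using zfib_lcm[of 2 3] zfib_lcm[of 4 3] by (simp_all add: zfib_2 zfib_3 zfib_4)
qed

lemma prime_power_dvd_lcmD:
  fixes x y :: nat
  assumes "prime P" "0 < x" "0 < y" "P ^ E dvd lcm x y"
  shows "P ^ E dvd x \<or> P ^ E dvd y"
proof -
  have P: "P \<noteq> 1" using prime_gt_1_nat[OF assms(1)] by simp
  have "E \<le> multiplicity P (lcm x y)"
    using assms(2-4) P power_dvd_iff_le_multiplicity[of "lcm x y" P E] by simp
  also have "\<dots> = max (multiplicity P x) (multiplicity P y)"
    using assms(1-3) multiplicity_lcm[of x y P] by simp
  finally show ?thesis
    using assms(2,3) P power_dvd_iff_le_multiplicity[of x P E] power_dvd_iff_le_multiplicity[of y P E]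
    by (auto simp: max_def split: if_splits)
qed

lemma zfib_split_prime_power:
  assumes "prime q" "0 < c"
  obtains s where "c = q ^ multiplicity q c * s" "\<not> q dvd s" "0 < s"
    and "zfib c = lcm (zfib (q ^ multiplicity q c)) (zfib s)"
proof -
  obtain s where s: "c = q ^ multiplicity q c * s" "\<not> q dvd s"
    using multiplicity_decompose'[of c q] assms not_prime_unit by blast
  moreover have "0 < s" using s assms(2) by (auto intro: gr0I)
  moreover have "zfib c = lcm (zfib (q ^ multiplicity q c)) (zfib s)"
  proof -
    have "coprime (q ^ multiplicity q c) s" using s(2) assms(1) by (simp add: prime_imp_coprime)
    moreover have "0 < q ^ multiplicity q c" using assms(1) prime_gt_0_nat by simp
    ultimately show ?thesis using zfib_mult_coprime \<open>0 < s\<close> s(1) by metis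
  qed
  ultimately show ?thesis using that by blast
qed

lemma prime_power_dvd_zfib_prime_power_other:
  assumes "prime q" "q \<noteq> P" "prime P" "P ^ E dvd zfib (q ^ e)"
  shows "P ^ E dvd zfib q"
proof (cases e)
  case 0
  then have "E = 0" using assms(3,4) zfib_1 prime_gt_1_nat[OF assms(3)] by simp
  then show ?thesis by simp
next
  case (Suc e')
  then have "P ^ E dvd q ^ e' * zfib q"
    using assms(4) zfib_prime_power_dvd[OF assms(1)] dvd_trans by blast
  moreover have "coprime (P ^ E) (q ^ e')" using assms by (simp add: primes_coprime)
  ultimately show ?thesis by (simp add: coprime_dvd_mult_right_iff)
qed

lemma prime_power_dvd_zfib_prime_power_self:
  assumes "prime P" "\<not> P dvd zfib P" "0 < E" "P ^ E dvd zfib (P ^ e)"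
  shows "E < e"
proof (cases e)
  case 0
  then show ?thesis using assms zfib_1 prime_gt_1_nat[OF assms(1)] by simp
next
  case (Suc e')
  then have "P ^ E dvd P ^ e' * zfib P"
    using assms(4) zfib_prime_power_dvd[OF assms(1)] dvd_trans by blast
  moreover have "coprime (P ^ E) (zfib P)" using assms(1,2) by (simp add: prime_imp_coprime)
  ultimately have "P ^ E dvd P ^ e'" by (simp add: coprime_dvd_mult_left_iff)
  then show ?thesis using Suc prime_ge_2_nat[OF assms(1)] by (simp add: dvd_power_iff_le)
qed

lemma not_prime_power_dvd_zfib:
  assumes P: "prime P" "0 < m"
  shows "0 < r \<Longrightarrow> \<not> P dvd r \<Longrightarrow> (\<And>q. prime q \<Longrightarrow> q dvd r \<Longrightarrow> \<not> P ^ m dvd zfib q) \<Longrightarrow>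
    \<not> P ^ m dvd zfib r"
proof (induction r rule: less_induct)
  case (less r)
  show ?case
  proof (cases "r = 1")
    case True
    show ?thesis using P prime_gt_1_nat[OF P(1)] unfolding True zfib_1 by simp
  next
    case False
    then obtain q where q: "prime q" "q dvd r" using prime_factor_nat by blast
    define Q where "Q = q ^ multiplicity q r"
    obtain s where s: "r = Q * s" "\<not> q dvd s" "0 < s" and z: "zfib r = lcm (zfib Q) (zfib s)"
      using zfib_split_prime_power[OF q(1) less.prems(1)] unfolding Q_def by blast
    have "q \<noteq> P" using q(2) less.prems(2) by blast
    then have "\<not> P ^ m dvd zfib Q"
      using prime_power_dvd_zfib_prime_power_other[OF q(1) _ P(1)] less.prems(3) q unfolding Q_def by blast
    moreover have "\<not> P ^ m dvd zfib s"
    proof (rule less.IH)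
      have "0 < multiplicity q r" using q less.prems(1) by (simp add: prime_multiplicity_gt_zero_iff)
      then have "1 < Q" unfolding Q_def using prime_gt_1_nat[OF q(1)] by (rule one_less_power[rotated])
      then show "s < r" using s(1,3) by simp
      have "s dvd r" using s(1) by simp
      then show "\<not> P dvd s" "\<And>q. prime q \<Longrightarrow> q dvd s \<Longrightarrow> \<not> P ^ m dvd zfib q"
        using less.prems(2,3) dvd_trans by blast+
    qed (fact s(3))
    moreover have "0 < zfib Q" "0 < zfib s"
      using zfib_pos q(1) s(3) prime_gt_0_nat by (simp_all add: Q_def)
    ultimately show ?thesis using z prime_power_dvd_lcmD[OF P(1)] by metis
  qed
qed

(* Writing \<open>c = P\<^sup>e s\<close>, \<open>z(c) = lcm (z(P\<^sup>e)) (z(s))\<close> and the \<open>P\<close>-part of \<open>z(P\<^sup>e)\<close> is at most \<open>P\<^bsup>e-1\<^esup>\<close>. *)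
lemma power_Suc_dvd_of_power_dvd_zfib:
  assumes P: "prime P" "\<not> P dvd zfib P" and "0 < c" "K < E" "P ^ E dvd zfib c"
    and small: "\<And>q. prime q \<Longrightarrow> q dvd c \<Longrightarrow> q \<noteq> P \<Longrightarrow> \<not> P ^ Suc K dvd zfib q"
  shows "P ^ Suc E dvd c"
proof -
  define Q where "Q = P ^ multiplicity P c"
  obtain s where s: "c = Q * s" "\<not> P dvd s" "0 < s" and z: "zfib c = lcm (zfib Q) (zfib s)"
    using zfib_split_prime_power[OF P(1) \<open>0 < c\<close>] unfolding Q_def by blast
  have "\<not> P ^ Suc K dvd zfib s"
  proof (rule not_prime_power_dvd_zfib[OF P(1) _ s(3,2)])
    fix q assume "prime q" "q dvd s"
    moreover from this have "q dvd c" "q \<noteq> P" using s(1,2) by auto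
    ultimately show "\<not> P ^ Suc K dvd zfib q" using small by blast
  qed simp
  moreover have "P ^ Suc K dvd P ^ E" using \<open>K < E\<close> by (intro le_imp_power_dvd) simp
  ultimately have "\<not> P ^ E dvd zfib s" using dvd_trans by blast
  moreover have "0 < zfib Q" "0 < zfib s"
    using zfib_pos P(1) s(3) prime_gt_0_nat by (simp_all add: Q_def)
  ultimately have "P ^ E dvd zfib Q"
    using z assms(5) prime_power_dvd_lcmD[OF P(1)] by metis
  then have "E < multiplicity P c"
    using prime_power_dvd_zfib_prime_power_self[OF P] \<open>K < E\<close> unfolding Q_def by simp
  then have "P ^ Suc E dvd Q" unfolding Q_def by (intro le_imp_power_dvd) simp
  then show ?thesis using s(1) by simp
qed

lemma prime_dvd_zfib_prime_less:
  assumes q: "prime q" "q \<noteq> 2" "q \<noteq> 5" and P: "prime P" "P dvd zfib q"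
  shows "P < q"
proof -
  have "odd q" using q by (metis primes_dvd_imp_eq two_is_prime_nat)
  moreover have "2 \<le> q" using prime_ge_2_nat[OF q(1)] .
  ultimately have "3 \<le> q" by (cases "q = 2") auto
  from zfib_prime_dvd_pred_or_succ[OF q] show ?thesis
  proof
    assume "zfib q dvd q - 1"
    then have "P dvd q - 1" using P(2) dvd_trans by blast
    then show ?thesis using \<open>3 \<le> q\<close> by (auto dest: dvd_imp_le)
  next
    assume "zfib q dvd q + 1"
    then have "P dvd 2 * ((q + 1) div 2)" using P(2) \<open>odd q\<close> dvd_trans by simp
    then have "P dvd 2 \<or> P dvd (q + 1) div 2" using P(1) prime_dvd_mult_iff by blast
    then have "P = 2 \<or> P dvd (q + 1) div 2" using primes_dvd_imp_eq[OF P(1) two_is_prime_nat] by blast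
    then show ?thesis using \<open>3 \<le> q\<close> by (auto dest: dvd_imp_le)
  qed
qed

lemma not_dvd_zfib_prime_le:
  assumes P: "prime P" "5 < P" and r: "prime r" "r \<le> P"
  shows "\<not> P dvd zfib r"
proof
  assume dvd: "P dvd zfib r"
  consider "r = 2" | "r = 5" | "r \<noteq> 2" "r \<noteq> 5" by blast
  then show False
  proof cases
    case 1
    then show False using dvd P(2) zfib_2 by (auto dest: dvd_imp_le)
  next
    case 2
    then show False using dvd P(2) zfib_5 by (auto dest: dvd_imp_le)
  next
    case 3
    then show False using prime_dvd_zfib_prime_less[OF r(1) 3 P(1) dvd] r(2) by simp
  qed
qed

lemma five_power_dvd_fib: "5 ^ w dvd fib (5 ^ w)"
proof (cases w)
  case (Suc v)
  have "zfib (5 ^ w) dvd 5 ^ w"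
    using zfib_prime_power_dvd[of 5 v] Suc by (simp add: zfib_5 mult.commute)
  then show ?thesis by (simp add: dvd_fib_iff_zfib_dvd)
qed simp

lemma eq_prime_power_if_prime_divisors:
  fixes q d :: nat
  assumes "prime q" "0 < d" "\<And>r. prime r \<Longrightarrow> r dvd d \<Longrightarrow> r = q"
  shows "d = q ^ multiplicity q d"
proof -
  define m where "m = multiplicity q d"
  obtain s where s: "d = q ^ m * s" "\<not> q dvd s"
    using multiplicity_decompose'[of d q] assms(1,2) not_prime_unit unfolding m_def by blast
  have "s = 1"
  proof (rule ccontr)
    assume "s \<noteq> 1"
    then obtain r where r: "prime r" "r dvd s" using prime_factor_nat by blast
    then have "r dvd d" using s(1) by simp
    then show False using assms(3) r s(2) by blast
  qed
  with s(1) have "d = q ^ m" by simp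
  then show ?thesis unfolding m_def .
qed

lemma dvd_fib_self_if_prime_divisors_5:
  assumes "0 < d" "\<And>r. prime r \<Longrightarrow> r dvd d \<Longrightarrow> r = 5"
  shows "d dvd fib d"
proof -
  have "d = 5 ^ multiplicity 5 d" using eq_prime_power_if_prime_divisors[of 5 d] assms by simp
  then show ?thesis by (metis five_power_dvd_fib)
qed

lemma twelve_mult_dvd_fib:
  assumes "\<not> 2 dvd d" "\<not> 3 dvd d" "d dvd fib d"
  shows "12 * d dvd fib (12 * d)"
proof -
  have "coprime 2 d" "coprime 3 d" using assms(1,2) by (simp_all add: prime_imp_coprime)
  then have "coprime 12 d"
    using coprime_mult_left_iff[of 4 3 d] coprime_power_left_iff[of 2 2 d] by simp
  moreover have "12 dvd fib (12 * d)"
    using fib_dvd_fib[of 12 "12 * d"] fib_values(5) dvd_trans[of "12::nat" 144] by simp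
  moreover have "d dvd fib (12 * d)" using assms(3) fib_dvd_fib[of d "12 * d"] dvd_trans by simp
  ultimately show ?thesis by (simp add: divides_mult)
qed

locale zfib_cycle =
  fixes c p :: nat
  assumes pos: "0 < c" and period_pos: "0 < p" and periodic: "(zfib ^^ p) c = c"
begin

abbreviation orbit :: "nat \<Rightarrow> nat" where
  "orbit t \<equiv> (zfib ^^ t) c"

lemma orbit_pos: "0 < orbit t"
  by (induction t) (simp_all add: pos zfib_pos)

lemma orbit_Suc_dvd: "a dvd orbit t \<Longrightarrow> zfib a dvd orbit (Suc t)"
  using zfib_dvd_zfib[OF orbit_pos] by simp

lemma orbit_add_mult_period: "orbit (t + n * p) = orbit t"
proof (induction n)
  case (Suc n)
  have "orbit (t + Suc n * p) = (zfib ^^ (t + n * p)) ((zfib ^^ p) c)"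
    by (simp add: funpow_add add.assoc add.commute[of p])
  then show ?case using Suc periodic by simp
qed simp

lemma finite_orbit: "finite (range orbit)"
proof -
  have "orbit t \<in> orbit ` {..<p}" for t
  proof (rule rev_image_eqI)
    show "t mod p \<in> {..<p}" using period_pos by simp
    show "orbit t = orbit (t mod p)"
      using orbit_add_mult_period[of "t mod p" "t div p"] by simp
  qed
  then have "range orbit \<subseteq> orbit ` {..<p}" by blast
  then show ?thesis by (rule finite_subset) simp
qed

lemma orbit_eq_zfib_orbit: "\<exists>s. orbit t = zfib (orbit s)"
proof
  have "t + 1 * p = Suc (t + p - 1)" using period_pos by simp
  then show "orbit t = zfib (orbit (t + p - 1))"
    using orbit_add_mult_period[of t 1] by (metis comp_apply funpow.simps(2))
qed

(* An orbit element of maximal \<open>P\<close>-adic valuation is \<open>z\<close> of another orbit element,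
   whose valuation would then be even larger. *)
lemma not_prime_power_dvd_orbit:
  assumes P: "prime P" "\<not> P dvd zfib P"
    and small: "\<And>t q. prime q \<Longrightarrow> q dvd orbit t \<Longrightarrow> q \<noteq> P \<Longrightarrow> \<not> P ^ Suc K dvd zfib q"
  shows "\<not> P ^ Suc K dvd orbit t"
proof
  assume dvd: "P ^ Suc K dvd orbit t"
  define M where "M = Max (multiplicity P ` range orbit)"
  have fin: "finite (multiplicity P ` range orbit)" using finite_orbit by simp
  have le_M: "multiplicity P (orbit s) \<le> M" for s
    unfolding M_def using fin by (intro Max_ge) auto
  have unit: "\<not> is_unit P" using P(1) not_prime_unit by blast
  have "Suc K \<le> multiplicity P (orbit t)"
    using orbit_pos[of t] by (intro multiplicity_geI[OF _ unit dvd]) simp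
  then have "K < M" using le_M[of t] by simp
  obtain t0 where t0: "multiplicity P (orbit t0) = M"
    using Max_in[OF fin] unfolding M_def by auto
  obtain s where s: "orbit t0 = zfib (orbit s)" using orbit_eq_zfib_orbit by blast
  have "P ^ M dvd zfib (orbit s)" using multiplicity_dvd[of P "orbit t0"] t0 s by simp
  then have "P ^ Suc M dvd orbit s"
    using power_Suc_dvd_of_power_dvd_zfib[OF P orbit_pos \<open>K < M\<close>] small by blast
  then have "Suc M \<le> multiplicity P (orbit s)"
    using orbit_pos[of s] by (intro multiplicity_geI[OF _ unit]) simp_all
  then show False using le_M[of s] by simp
qed

lemma prime_dvd_orbit_le_5:
  assumes "prime q" "q dvd orbit t"
  shows "q \<le> 5"
proof (rule ccontr)
  define S where "S = {q. prime q \<and> (\<exists>t. q dvd orbit t)}"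
  have "S \<subseteq> {..Max (range orbit)}"
  proof
    fix r assume "r \<in> S"
    then obtain t where "r dvd orbit t" unfolding S_def by blast
    then have "r \<le> orbit t" using orbit_pos dvd_imp_le by blast
    also have "\<dots> \<le> Max (range orbit)" using finite_orbit by (intro Max_ge) auto
    finally show "r \<in> {..Max (range orbit)}" by simp
  qed
  then have fin: "finite S" by (rule finite_subset) simp
  define P where "P = Max S"
  have "q \<in> S" using assms unfolding S_def by blast
  then have "P \<in> S" "q \<le> P" unfolding P_def using fin by (auto intro: Max_in)
  then obtain t1 where P: "prime P" "P dvd orbit t1" unfolding S_def by blast
  assume "\<not> q \<le> 5"
  with \<open>q \<le> P\<close> have "5 < P" by simp
  have le_P: "r \<le> P" if "prime r" "r dvd orbit t" for r t
  proof -
    have "r \<in> S" using that unfolding S_def by blast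
    then show ?thesis unfolding P_def using fin by simp
  qed
  have "\<not> P ^ Suc 0 dvd orbit t1"
  proof (rule not_prime_power_dvd_orbit[OF P(1)])
    show "\<not> P dvd zfib P" using not_dvd_zfib_prime_le[OF P(1) \<open>5 < P\<close> P(1)] by simp
    fix t r assume "prime r" "r dvd orbit t" "r \<noteq> P"
    then show "\<not> P ^ Suc 0 dvd zfib r" using not_dvd_zfib_prime_le[OF P(1) \<open>5 < P\<close>] le_P by simp
  qed
  then show False using P(2) by simp
qed

lemma prime_dvd_orbit_cases:
  assumes "prime q" "q dvd orbit t"
  shows "q = 2 \<or> q = 3 \<or> q = 5"
proof -
  have "2 \<le> q" "q \<le> 5" using prime_ge_2_nat prime_dvd_orbit_le_5 assms by blast+
  moreover have "q \<noteq> 4" using primes_dvd_imp_eq[OF two_is_prime_nat assms(1)] by auto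
  ultimately show ?thesis by linarith
qed

lemma not_9_dvd_orbit: "\<not> 9 dvd orbit t"
proof -
  have "\<not> 3 ^ Suc 1 dvd zfib q" if "prime q" "q dvd orbit t" "q \<noteq> 3" for t q
    using prime_dvd_orbit_cases[OF that(1,2)] that(3) by (auto simp: zfib_2 zfib_5)
  then have "\<not> 3 ^ Suc 1 dvd orbit t"
    by (intro not_prime_power_dvd_orbit) (simp_all add: zfib_3)
  then show ?thesis by simp
qed

lemma not_8_dvd_orbit: "\<not> 8 dvd orbit t"
proof -
  have "\<not> 2 ^ Suc 2 dvd zfib q" if "prime q" "q dvd orbit t" "q \<noteq> 2" for t q
    using prime_dvd_orbit_cases[OF that(1,2)] that(3) by (auto simp: zfib_3 zfib_5)
  then have "\<not> 2 ^ Suc 2 dvd orbit t"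
    by (intro not_prime_power_dvd_orbit) (simp_all add: zfib_2)
  then show ?thesis by simp
qed

end

context zfib_cycle
begin

lemma twelve_dvd_orbit:
  assumes "2 dvd orbit s \<or> 3 dvd orbit s"
  shows "12 dvd orbit t"
proof -
  have "3 dvd orbit s \<or> 3 dvd orbit (Suc s)"
    using assms orbit_Suc_dvd[of 2 s] zfib_2 by auto
  then obtain u where "3 dvd orbit u" by blast
  then have "4 dvd orbit (Suc u)" using orbit_Suc_dvd zfib_3 by fastforce
  then have "6 dvd orbit (Suc (Suc u))" using orbit_Suc_dvd zfib_4 by fastforce
  then have "12 dvd orbit (Suc (Suc (Suc u)))" using orbit_Suc_dvd zfib_6 by fastforce
  define k where "k = Suc (Suc (Suc u))"
  have twelve: "12 dvd orbit (k + n)" for n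
  proof (induction n)
    case 0
    show ?case using \<open>12 dvd orbit (Suc (Suc (Suc u)))\<close> by (simp add: k_def)
  next
    case (Suc n)
    then show ?case using orbit_Suc_dvd zfib_12 by fastforce
  qed
  have "k \<le> k * p" using period_pos by simp
  then have "t + k * p = k + (t + k * p - k)" by linarith
  then have "12 dvd orbit (t + k * p)" using twelve by metis
  then show ?thesis using orbit_add_mult_period by simp
qed

lemma orbit_dvd_fib: "orbit t dvd fib (orbit t)"
proof (cases "2 dvd orbit t \<or> 3 dvd orbit t")
  case True
  then obtain d where d: "orbit t = 12 * d" using twelve_dvd_orbit by blast
  have "\<not> 2 dvd d" using not_8_dvd_orbit[of t] d by (auto elim!: dvdE)
  moreover have "\<not> 3 dvd d" using not_9_dvd_orbit[of t] d by (auto elim!: dvdE)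
  moreover have "d dvd fib d"
  proof (rule dvd_fib_self_if_prime_divisors_5)
    show "0 < d" using orbit_pos[of t] d by (auto intro: gr0I)
    fix r assume "prime r" "r dvd d"
    moreover from this have "r dvd orbit t" using d by simp
    ultimately show "r = 5"
      using prime_dvd_orbit_cases \<open>\<not> 2 dvd d\<close> \<open>\<not> 3 dvd d\<close> by blast
  qed
  ultimately show ?thesis using d twelve_mult_dvd_fib by simp
next
  case False
  then have "r = 5" if "prime r" "r dvd orbit t" for r
    using prime_dvd_orbit_cases[OF that] that(2) by auto
  then show ?thesis using dvd_fib_self_if_prime_divisors_5 orbit_pos by blast
qed

lemma zfib_fixed: "zfib c = c"
proof -
  have desc: "orbit (Suc t) dvd orbit t" for t
    using orbit_dvd_fib[of t] dvd_fib_iff_zfib_dvd[OF orbit_pos] by simp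
  have "orbit (Suc t) dvd orbit 1" for t
    by (induction t) (simp, metis desc dvd_trans)
  then have "orbit (Suc (p - 1)) dvd orbit 1" .
  then have "c dvd zfib c" using period_pos periodic by simp
  moreover have "zfib c dvd c" using desc[of 0] by simp
  ultimately show ?thesis by (simp add: dvd_antisym)
qed

end

definition zfib_orbit :: "nat \<Rightarrow> nat set" where
  "zfib_orbit k = range (\<lambda>i. (zfib ^^ Suc i) k)"

lemma zfib_orbit_eq: "{(zfib ^^ i) k | i. 1 \<le> i} = zfib_orbit k"
  unfolding zfib_orbit_def
proof (rule equalityI; rule subsetI)
  fix x assume "x \<in> {(zfib ^^ i) k | i. 1 \<le> i}"
  then obtain i where "x = (zfib ^^ i) k" "1 \<le> i" by blast
  then have "x = (zfib ^^ Suc (i - 1)) k" by (simp del: funpow.simps)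
  then show "x \<in> range (\<lambda>i. (zfib ^^ Suc i) k)" by blast
next
  fix x assume "x \<in> range (\<lambda>i. (zfib ^^ Suc i) k)"
  then obtain i where "x = (zfib ^^ Suc i) k" by blast
  then show "x \<in> {(zfib ^^ i) k | i. 1 \<le> i}" by (intro CollectI exI[of _ "Suc i"]) simp
qed

lemma zfib_iterate_pos: "0 < k \<Longrightarrow> 0 < (zfib ^^ i) k"
  by (induction i) (simp_all add: zfib_pos)

lemma A_setD:
  assumes "n \<in> A_set k"
  shows "0 < n" "n = k * zfib n" "0 < k" "zfib (zfib n) dvd zfib n"
proof -
  from assms have n: "0 < n" "zfib n dvd n" "n div zfib n = k" unfolding A_set_def by auto
  show "0 < n" by (fact n(1))
  show n_eq: "n = k * zfib n" using n(2,3) by (metis dvd_div_mult_self)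
  show "0 < k" using n(1) n_eq by (metis mult_is_0 neq0_conv)
  show "zfib (zfib n) dvd zfib n" using zfib_dvd_zfib[OF n(1,2)] .
qed

lemma zfib_iterate_dvd_zfib:
  assumes "n \<in> A_set k"
  shows "(zfib ^^ Suc i) k dvd zfib n"
proof (induction i)
  case 0
  have "k dvd n" using A_setD(2)[OF assms] by (metis dvd_triv_left)
  then show ?case using zfib_dvd_zfib A_setD(1)[OF assms] by simp
next
  case (Suc i)
  have "0 < zfib n" using zfib_pos A_setD(1)[OF assms] by blast
  with Suc have "zfib ((zfib ^^ Suc i) k) dvd zfib (zfib n)" by (rule zfib_dvd_zfib[rotated])
  then show ?case using A_setD(4)[OF assms] by (metis dvd_trans funpow.simps(2) comp_apply)
qed

lemma finite_zfib_orbit: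
  assumes "n \<in> A_set k"
  shows "finite (zfib_orbit k)"
proof -
  have "zfib_orbit k \<subseteq> {d. d dvd zfib n}"
    using zfib_iterate_dvd_zfib[OF assms] by (auto simp: zfib_orbit_def simp del: funpow.simps)
  moreover have "0 < zfib n" using zfib_pos A_setD(1)[OF assms] by blast
  ultimately show ?thesis by (simp add: finite_subset)
qed

lemma zfib_iterate_eventually_fixed:
  assumes "0 < k" "finite (zfib_orbit k)"
  shows "\<exists>j\<ge>1. \<forall>i\<ge>j. (zfib ^^ i) k = (zfib ^^ j) k \<and> zfib ((zfib ^^ j) k) = (zfib ^^ j) k"
proof -
  define a where "a i = (zfib ^^ Suc i) k" for i
  have "range a = zfib_orbit k" by (simp add: a_def zfib_orbit_def)
  then have "\<not> inj a" using assms(2) finite_imageD[of a UNIV] by auto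
  then obtain x y where xy: "a x = a y" "x \<noteq> y" unfolding inj_def by blast
  define i j where "i = min x y" and "j = max x y"
  have "a i = a j" "i < j" using xy by (simp_all add: i_def j_def min_def max_def)
  have "(zfib ^^ (j - i)) (a i) = (zfib ^^ (j - i + Suc i)) k" by (simp only: a_def funpow_add comp_apply)
  also have "j - i + Suc i = Suc j" using \<open>i < j\<close> by simp
  finally have "(zfib ^^ (j - i)) (a i) = a i" using \<open>a i = a j\<close> by (simp add: a_def)
  moreover have "0 < a i" unfolding a_def by (rule zfib_iterate_pos[OF assms(1)])
  ultimately interpret zfib_cycle "a i" "j - i"
    using \<open>i < j\<close> by unfold_locales simp_all
  have "(zfib ^^ d) (a i) = a i" for d
    by (induction d) (simp_all add: zfib_fixed)
  then have "(zfib ^^ (d + Suc i)) k = a i" for d by (simp only: funpow_add comp_apply a_def[symmetric])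
  then have "\<forall>i'\<ge>Suc i. (zfib ^^ i') k = a i" by (metis le_add_diff_inverse2)
  then show ?thesis using zfib_fixed by (intro exI[of _ "Suc i"]) (simp add: a_def)
qed

lemma zfib_mem_zfib_orbit: "zfib k \<in> zfib_orbit k" "x \<in> zfib_orbit k \<Longrightarrow> zfib x \<in> zfib_orbit k"
  unfolding zfib_orbit_def by (auto intro: range_eqI[of _ _ 0] range_eqI[of _ _ "Suc _"])

lemma zfib_orbit_pos: "0 < k \<Longrightarrow> x \<in> zfib_orbit k \<Longrightarrow> 0 < x"
  unfolding zfib_orbit_def using zfib_iterate_pos by blast

lemma Lcm_zfib_orbit_pos: "0 < k \<Longrightarrow> finite (zfib_orbit k) \<Longrightarrow> 0 < Lcm (zfib_orbit k)"
  using zfib_orbit_pos[of k 0] Lcm_0_iff[of "zfib_orbit k"] by (auto intro: gr0I)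

lemma Lcm_zfib_orbit_dvd_fib:
  assumes "0 < k" "finite (zfib_orbit k)"
  shows "Lcm (zfib_orbit k) dvd fib (Lcm (zfib_orbit k))"
proof (rule Lcm_least)
  fix x assume x: "x \<in> zfib_orbit k"
  then have "x dvd fib (zfib x)" using zfib_orbit_pos[OF assms(1)] dvd_fib_zfib by blast
  also have "fib (zfib x) dvd fib (Lcm (zfib_orbit k))"
    using zfib_mem_zfib_orbit(2)[OF x] by (simp add: fib_dvd_fib)
  finally show "x dvd fib (Lcm (zfib_orbit k))" .
qed

lemma zfib_dvd_Lcm_zfib_orbit:
  assumes "0 < k" "finite (zfib_orbit k)" "d dvd k \<or> d dvd Lcm (zfib_orbit k)"
  shows "zfib d dvd Lcm (zfib_orbit k)"
  using assms(3)
proof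
  assume "d dvd k"
  then have "zfib d dvd zfib k" using assms(1) by (rule zfib_dvd_zfib[rotated])
  then show ?thesis using zfib_mem_zfib_orbit(1) dvd_trans by (blast intro: dvd_Lcm)
next
  define L where "L = Lcm (zfib_orbit k)"
  assume "d dvd Lcm (zfib_orbit k)"
  then have "zfib d dvd zfib L" using Lcm_zfib_orbit_pos[OF assms(1,2)] by (simp add: L_def zfib_dvd_zfib)
  moreover have "zfib L dvd L"
    using Lcm_zfib_orbit_dvd_fib[OF assms(1,2)] Lcm_zfib_orbit_pos[OF assms(1,2)]
    by (simp add: L_def dvd_fib_iff_zfib_dvd)
  ultimately show ?thesis unfolding L_def using dvd_trans by blast
qed

lemma Lcm_zfib_orbit_dvd_zfib: "n \<in> A_set k \<Longrightarrow> Lcm (zfib_orbit k) dvd zfib n"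
  using zfib_iterate_dvd_zfib by (auto simp: zfib_orbit_def simp del: funpow.simps intro: Lcm_least)

lemma mult_Lcm_zfib_orbit_dvd_fib:
  assumes n: "n \<in> A_set k"
  defines "L \<equiv> Lcm (zfib_orbit k)"
  shows "k * L dvd fib L"
proof -
  have k: "0 < k" and fin: "finite (zfib_orbit k)"
    using A_setD(3) finite_zfib_orbit n by blast+
  have L: "0 < L" "L dvd fib L"
    unfolding L_def using Lcm_zfib_orbit_pos Lcm_zfib_orbit_dvd_fib k fin by blast+
  have zL: "zfib d dvd L" if "d dvd k \<or> d dvd L" for d
    using zfib_dvd_Lcm_zfib_orbit[OF k fin] that unfolding L_def .
  have "k dvd fib L" using zL[of k] k by (simp add: dvd_fib_iff_zfib_dvd)
  obtain D where D: "zfib n = L * D"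
    using Lcm_zfib_orbit_dvd_zfib[OF n] unfolding L_def by blast
  have "0 < D" using D zfib_pos A_setD(1)[OF n] by (metis gr0I mult_0_right)
  moreover have "k * L * D dvd fib (L * D)"
    using dvd_fib_zfib[OF A_setD(1)[OF n]] A_setD(2)[OF n] D by (simp add: mult.assoc)
  moreover have "r dvd fib L \<and> (r = 2 \<longrightarrow> 4 dvd fib L)" if r: "prime r" "r dvd k * L" for r
  proof
    have "r dvd k \<or> r dvd L" using r prime_dvd_mult_iff by blast
    then show "r dvd fib L" using \<open>k dvd fib L\<close> L(2) dvd_trans by blast
    show "r = 2 \<longrightarrow> 4 dvd fib L"
    proof
      assume "r = 2"
      then have "3 dvd L" using zL[of 2] \<open>r dvd k \<or> r dvd L\<close> by (simp add: zfib_2)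
      then have "4 dvd L" using zL[of 3] by (simp add: zfib_3)
      with \<open>3 dvd L\<close> have "lcm 3 4 dvd L" by (rule lcm_least)
      then have "fib 12 dvd fib L" by (simp add: lcm_nat_def gcd_non_0_nat fib_dvd_fib)
      then show "4 dvd fib L" using fib_values(5) dvd_trans[of "4::nat" 144] by simp
    qed
  qed
  ultimately show ?thesis using dvd_fib_of_dvd_fib_mult[OF L(1)] by blast
qed

lemma zfib_mult_Lcm_zfib_orbit:
  assumes n: "n \<in> A_set k"
  shows "zfib (k * Lcm (zfib_orbit k)) = Lcm (zfib_orbit k)"
proof (rule dvd_antisym)
  have k: "0 < k" and fin: "finite (zfib_orbit k)"
    using A_setD(3) finite_zfib_orbit n by blast+
  then have kL: "0 < k * Lcm (zfib_orbit k)" using Lcm_zfib_orbit_pos by simp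
  then show "zfib (k * Lcm (zfib_orbit k)) dvd Lcm (zfib_orbit k)"
    using mult_Lcm_zfib_orbit_dvd_fib[OF n] by (simp add: dvd_fib_iff_zfib_dvd)
  show "Lcm (zfib_orbit k) dvd zfib (k * Lcm (zfib_orbit k))"
  proof (rule Lcm_least)
    fix x assume "x \<in> zfib_orbit k"
    then obtain i where x: "x = zfib ((zfib ^^ i) k)" by (auto simp: zfib_orbit_def)
    have "(zfib ^^ i) k dvd k * Lcm (zfib_orbit k)"
    proof (cases i)
      case (Suc j)
      then have "(zfib ^^ i) k \<in> zfib_orbit k" by (simp add: zfib_orbit_def del: funpow.simps)
      then show ?thesis by (simp add: dvd_Lcm)
    qed simp
    then show "x dvd zfib (k * Lcm (zfib_orbit k))" using x kL by (simp add: zfib_dvd_zfib)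
  qed
qed

lemma c_min_eq_mult_Lcm:
  assumes n: "n \<in> A_set k"
  shows "c_min k = k * Lcm (zfib_orbit k)"
  unfolding c_min_def
proof (rule Least_equality)
  have "0 < k * Lcm (zfib_orbit k)"
    using A_setD(3)[OF n] finite_zfib_orbit[OF n] Lcm_zfib_orbit_pos by simp
  then show "k * Lcm (zfib_orbit k) \<in> A_set k"
    using zfib_mult_Lcm_zfib_orbit[OF n] A_setD(3)[OF n] by (simp add: A_set_def)
  fix n' assume n': "n' \<in> A_set k"
  have "Lcm (zfib_orbit k) \<le> zfib n'"
    using Lcm_zfib_orbit_dvd_zfib[OF n'] zfib_pos A_setD(1)[OF n'] by (simp add: dvd_imp_le)
  then show "k * Lcm (zfib_orbit k) \<le> n'" using A_setD(2)[OF n'] by (metis mult_le_mono2)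
qed

theorem theorem2p2:
  fixes k :: nat
  assumes "0 < k" and "A_set k \<noteq> {}"
  shows "finite {(zfib ^^ i) k | i. 1 \<le> i}
         \<and> (\<exists>j\<ge>1. \<forall>i\<ge>j. (zfib ^^ i) k = (zfib ^^ j) k \<and> zfib ((zfib ^^ j) k) = (zfib ^^ j) k)
         \<and> c_min k = k * Lcm {(zfib ^^ i) k | i. 1 \<le> i}"
proof -
  obtain n where n: "n \<in> A_set k" using assms(2) by blast
  have "finite (zfib_orbit k)" by (rule finite_zfib_orbit[OF n])
  then show ?thesis
    unfolding zfib_orbit_eq using zfib_iterate_eventually_fixed[OF assms(1)] c_min_eq_mult_Lcm[OF n] by blast
qed

end
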